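(* Let $L$ be any linear order. Then $L/\!\sim_\omega \;\cong 1$ (i.e. $L$ has exactly one $\sim_\omega$-class, or more precisely all elements of $L$ are $\sim_\omega$-equivalent) if and only if $L$ is isomorphic to a suborder of $U$.
   Context: For a linear order $L$ and $x,y\in L$, write $[\{x,y\}]$ for the closed interval between $x$ and $y$ (i.e. $[x,y]$ if $x\le y$, $[y,x]$ otherwise). The countable condensation $\sim_\omega$ on $L$ is defined by $x\sim_\omega y$ iff $|[\{x,y\}]|\le\aleph_0$; it is an equivalence relation whose classes are intervals, and $L/\!\sim_\omega$ is the linear order of classes (class $A<$ class $B$ iff every element of $A$ is below every element of $B$). $U$ (the "$\omega_1$-lengthened rational line") is the linear order with point set $\{u_\alpha:\alpha<\omega_1\}\cup\{-u_\alpha:\alpha<\omega_1\}\cup\bigcup_{\alpha<\omega_1}\mathbb{Q}(\alpha)\cup\bigcup_{\alpha<\omega_1}\mathbb{Q}(-\alpha)\cup\mathbb{Q}(\mathrm{mid})$, where each $\mathbb{Q}(\cdot)$ is a copy of the rationals, ordered as follows: the right part $R=\{u_\alpha\}\cup\bigcup\mathbb{Q}(\alpha)$ is ordered by $u_\alpha<\mathbb{Q}(\alpha)<u_{\alpha+1}$ and $\{u_\alpha\}\cup\mathbb{Q}(\alpha)<\{u_\beta\}\cup\mathbb{Q}(\beta)$ for $\alpha<\beta$ (so $R$ is $\omega_1$ with each point replaced by a point followed by a copy of $\mathbb{Q}$); the left part $\{-u_\alpha\}\cup\bigcup\mathbb{Q}(-\alpha)$ is ordered as the reverse of $R$ (so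 $-u_{\alpha+1}<\mathbb{Q}(-\alpha)<-u_\alpha$ and the blocks for larger $\alpha$ lie further left); and $U=(\text{left part})+\mathbb{Q}(\mathrm{mid})+R$, i.e. $-u_0<\mathbb{Q}(\mathrm{mid})<u_0$. *)

theory Defs
  imports Main "HOL-Library.Countable_Set"
begin

text \<open>A linear order is represented as a subset L of a type of class linorder
  (with the induced order). Closed interval between x and y inside L.\<close>

definition cinterval :: "'a::linorder set \<Rightarrow> 'a \<Rightarrow> 'a \<Rightarrow> 'a set" where
  "cinterval L x y = {z \<in> L. min x y \<le> z \<and> z \<le> max x y}"

definition sim_omega :: "'a::linorder set \<Rightarrow> 'a \<Rightarrow> 'a \<Rightarrow> bool" where
  "sim_omega L x y \<longleftrightarrow> countable (cinterval L x y)"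

text \<open>omega_1 is the cardinal successor of natLeq (an initial, well-order relation
  of order type omega_1); its points live in type nat set.\<close>

definition omega1 :: "nat set rel" where
  "omega1 = cardSuc natLeq"

definition w_less :: "nat set \<Rightarrow> nat set \<Rightarrow> bool" where
  "w_less a b \<longleftrightarrow> (a, b) \<in> omega1 \<and> a \<noteq> b"

text \<open>Points of U: Mid q is q in Q(mid); RPt a = u_a; RQ a q is q in Q(a);
  LPt a = -u_a; LQ a q is q in Q(-a).\<close>

datatype upoint = Mid rat | RPt "nat set" | RQ "nat set" rat | LPt "nat set" | LQ "nat set" rat

definition U_carrier :: "upoint set" where
  "U_carrier = range Mid \<union> RPt ` Field omega1 \<union> (\<lambda>(a,q). RQ a q) ` (Field omega1 \<times> UNIV)
     \<union> LPt ` Field omega1 \<union> (\<lambda>(a,q). LQ a q) ` (Field omega1 \<times> UNIV)"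

text \<open>Lexicographic key for the right part R: u_a corresponds to (a, False, 0),
  q in Q(a) to (a, True, q). Order: u_a < Q(a) < u_b < Q(b) for a < b.\<close>

definition rkey_less :: "nat set \<times> bool \<times> rat \<Rightarrow> nat set \<times> bool \<times> rat \<Rightarrow> bool" where
  "rkey_less k1 k2 = (case k1 of (a, f, q) \<Rightarrow> case k2 of (b, g, r) \<Rightarrow>
      w_less a b \<or> (a = b \<and> ((\<not> f \<and> g) \<or> (f \<and> g \<and> q < r))))"

fun upart :: "upoint \<Rightarrow> nat" where
  "upart (LPt a) = 0" | "upart (LQ a q) = 0" | "upart (Mid q) = 1"
| "upart (RPt a) = 2" | "upart (RQ a q) = 2"

fun ukey :: "upoint \<Rightarrow> nat set \<times> bool \<times> rat" where
  "ukey (LPt a) = (a, False, 0)" | "ukey (LQ a q) = (a, True, q)"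
| "ukey (RPt a) = (a, False, 0)" | "ukey (RQ a q) = (a, True, q)"
| "ukey (Mid q) = ({}, True, q)"

text \<open>Strict order of U: left part < Q(mid) < right part; the left part is the
  reverse of R.\<close>

definition U_less :: "upoint \<Rightarrow> upoint \<Rightarrow> bool" where
  "U_less x y \<longleftrightarrow>
     upart x < upart y
   \<or> (upart x = 2 \<and> upart y = 2 \<and> rkey_less (ukey x) (ukey y))
   \<or> (upart x = 0 \<and> upart y = 0 \<and> rkey_less (ukey y) (ukey x))
   \<or> (upart x = 1 \<and> upart y = 1 \<and> snd (snd (ukey x)) < snd (snd (ukey y)))"

definition embeds_in_U :: "'a::linorder set \<Rightarrow> bool" where
  "embeds_in_U L \<longleftrightarrow> (\<exists>f. inj_on f L \<and> f ` L \<subseteq> U_carrier \<and>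
      (\<forall>x\<in>L. \<forall>y\<in>L. x < y \<longleftrightarrow> U_less (f x) (f y)))"

end

(*
  Between two points of U lie only Q(mid) and blocks whose omega1-index is bounded by the index
  of an endpoint; as omega1 has countable initial segments, intervals of U are countable, so a
  suborder of U forms a single ~omega-class.

  Conversely, fix x0 in L. Each point of the ray above x0 has only countably many predecessors
  in it. Such an order maps monotonically into omega1 with countable fibres (index y by the
  first record above y in some well-order of the ray), and each countable fibre embeds into Q;
  together this embeds the ray into omega1 x Q ordered lexicographically, i.e. into R. The ray
  below x0 goes reversed into the left part of U, and x0 to Q(mid).
*)

theory Submission
  imports Defs "HOL-Library.Countable_Set_Type"
begin

unbundle cardinal_syntax

lemma Well_order_omega1: "Well_order omega1"
  unfolding omega1_def by (simp add: cardSuc_Well_order natLeq_Card_order)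

lemma antisym_omega1: "antisym omega1"
  using Well_order_omega1 by (simp add: well_order_on_def linear_order_on_def partial_order_on_def)

lemma refl_omega1: "a \<in> Field omega1 \<Longrightarrow> (a, a) \<in> omega1"
  using Well_order_omega1
  by (auto simp: well_order_on_def linear_order_on_def partial_order_on_def preorder_on_def refl_on_def)

lemma countable_under_omega1:
  assumes "a \<in> Field omega1"
  shows "countable {b. (b, a) \<in> omega1}"
proof -
  have "|underS omega1 a| <o cardSuc natLeq"
    using card_of_underS[OF cardSuc_Card_order[OF natLeq_Card_order]] assms
    unfolding omega1_def by blast
  then have "|underS omega1 a| \<le>o natLeq"
    using cardSuc_ordLeq_ordLess[OF natLeq_Card_order card_of_Card_order] by blast
  then have "countable (underS omega1 a)"
    using countable_card_le_natLeq by blast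
  moreover have "{b. (b, a) \<in> omega1} \<subseteq> insert a (underS omega1 a)"
    by (auto simp: underS_def)
  ultimately show ?thesis
    by (meson countable_insert countable_subset)
qed

lemma uncountable_Field_omega1: "\<not> countable (Field omega1)"
proof
  assume "countable (Field omega1)"
  then have "|Field omega1| \<le>o natLeq"
    using countable_card_le_natLeq by blast
  moreover have "|Field omega1| =o omega1"
    unfolding omega1_def by (simp add: card_of_Field_ordIso cardSuc_Card_order natLeq_Card_order)
  ultimately have "omega1 \<le>o natLeq"
    using ordIso_ordLeq_trans ordIso_symmetric by blast
  moreover have "natLeq <o omega1"
    unfolding omega1_def by (simp add: cardSuc_greater natLeq_Card_order)
  ultimately show False
    using not_ordLess_ordLeq by blast
qed

lemma ordLeq_omega1_if_countable_underS:
  assumes R: "Well_order R" and cnt: "\<And>a. a \<in> Field R \<Longrightarrow> countable (underS R a)"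
  shows "R \<le>o omega1"
proof -
  have "\<not> omega1 <o R"
  proof
    assume "omega1 <o R"
    then obtain a where a: "a \<in> Field R" "omega1 =o Restr R (underS R a)"
      using ordLess_iff_ordIso_Restr[OF R Well_order_omega1] by blast
    have "|Field omega1| \<le>o |Field (Restr R (underS R a))|"
      using a(2) by (simp add: card_of_mono2 ordIso_iff_ordLeq)
    also have "|Field (Restr R (underS R a))| \<le>o |underS R a|"
      by (rule card_of_mono1[OF Field_Restr_subset])
    also have "|underS R a| \<le>o natLeq"
      using cnt[OF a(1)] countable_card_le_natLeq by blast
    finally show False
      using countable_card_le_natLeq uncountable_Field_omega1 by blast
  qed
  then show ?thesis
    using ordLess_or_ordLeq[OF Well_order_omega1 R] by blast
qed

lemma ternary_tail_bound:
  fixes a :: "nat \<Rightarrow> nat"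
  assumes "\<forall>k. a k \<le> 2" "j \<le> n"
  shows "(\<Sum>k<Suc n. of_nat (a k) / 3^k :: rat) \<le> (\<Sum>k<Suc j. of_nat (a k) / 3^k) + (1/3^j - 1/3^n)"
  using assms(2)
proof (induction n rule: dec_induct)
  case base
  then show ?case by simp
next
  case (step n)
  have "of_nat (a (Suc n)) / 3^Suc n \<le> (2::rat) / 3^Suc n"
    using assms(1) by (intro divide_right_mono) (auto simp: of_nat_le_iff[symmetric])
  also have "\<dots> = 1/3^n - 1/3^Suc n"
    by (simp add: field_simps)
  finally show ?case
    using step by simp
qed

lemma ternary_sum_less:
  fixes a b :: "nat \<Rightarrow> nat"
  assumes "\<forall>k. a k \<le> 2" "j \<le> n" "j \<le> m" "\<forall>k<j. a k = b k" "a j < b j"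
  shows "(\<Sum>k<Suc n. of_nat (a k) / 3^k :: rat) < (\<Sum>k<Suc m. of_nat (b k) / 3^k)"
proof -
  have prefix: "(\<Sum>k<j. of_nat (a k) / 3^k :: rat) = (\<Sum>k<j. of_nat (b k) / 3^k)"
    using assms(4) by (intro sum.cong) auto
  have "of_nat (a j) + 1 \<le> (of_nat (b j) :: rat)"
    using assms(5) by (metis Suc_leI of_nat_Suc of_nat_le_iff add.commute)
  then have digit: "of_nat (a j) / 3^j + 1/3^j \<le> (of_nat (b j) :: rat) / 3^j"
    by (simp add: add_divide_distrib[symmetric] divide_right_mono)
  have "(\<Sum>k<Suc n. of_nat (a k) / 3^k :: rat) \<le> (\<Sum>k<Suc j. of_nat (a k) / 3^k) + (1/3^j - 1/3^n)"
    using ternary_tail_bound assms by blast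
  also have "\<dots> < (\<Sum>k<Suc j. of_nat (a k) / 3^k) + 1/3^j"
    by simp
  also have "\<dots> \<le> (\<Sum>k<Suc j. of_nat (b k) / 3^k)"
    using prefix digit by simp
  also have "\<dots> \<le> (\<Sum>k<Suc m. of_nat (b k) / 3^k)"
    by (rule sum_mono2) (use assms(3) in auto)
  finally show ?thesis .
qed

lemma countable_strict_order_mono_rat:
  fixes r :: "'b rel"
  assumes A: "countable A" and trans: "trans r" and irrefl: "irrefl r"
  shows "\<exists>q::'b \<Rightarrow> rat. \<forall>x\<in>A. \<forall>y\<in>A. (x, y) \<in> r \<longrightarrow> q x < q y"
proof (cases "A = {}")
  case False
  define e where "e = from_nat_into A"
  define N where "N = to_nat_on A"
  define d where "d = (\<lambda>x k. if (e k, x) \<in> r then 2 else if e k = x then 1 else (0::nat))"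
  \<comment> \<open>Ternary expansion of the cut of x in the enumeration e, truncated after the position of x.\<close>
  define q where "q = (\<lambda>x. \<Sum>k<Suc (N x). of_nat (d x k) / 3^k :: rat)"
  have e: "e k \<in> A" for k
    using False by (simp add: e_def from_nat_into)
  have eN: "x \<in> A \<Longrightarrow> e (N x) = x" for x
    using A by (simp add: e_def N_def)
  have "q x < q y" if x: "x \<in> A" and y: "y \<in> A" and xy: "(x, y) \<in> r" for x y
  proof -
    have "(y, x) \<notin> r"
      using trans irrefl xy by (meson irrefl_def transD)
    then have d_mono: "d x k \<le> d y k" for k
      using trans xy by (auto simp: d_def dest: transD)
    \<comment> \<open>The digit at the position enumerating the smaller of x and y separates them.\<close>
    define m where "m = min (N x) (N y)"
    have "d x m \<noteq> d y m"
      using eN[OF x] eN[OF y] xy irrefl \<open>(y, x) \<notin> r\<close>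
      by (cases "N x \<le> N y") (auto simp: m_def d_def irrefl_def)
    define j where "j = (LEAST k. d x k \<noteq> d y k)"
    have "j \<le> m" "d x j \<noteq> d y j" "\<forall>k<j. d x k = d y k"
      unfolding j_def using \<open>d x m \<noteq> d y m\<close>
      by (auto intro: Least_le dest: not_less_Least LeastI[of "\<lambda>k. d x k \<noteq> d y k"])
    moreover have "\<forall>k. d x k \<le> 2"
      by (simp add: d_def)
    ultimately show ?thesis
      unfolding q_def using d_mono[of j]
      by (intro ternary_sum_less) (auto simp: m_def)
  qed
  then show ?thesis
    by blast
qed simp

text \<open>The W-least element c y among y and its r-successors is a record of W: it lies
  r-above all of its W-predecessors.\<close>

lemma well_order_record_map:
  fixes r W :: "'b rel"
  assumes r: "strict_linear_order_on S r" and W: "well_order_on S W"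
  obtains c where "\<And>y. y \<in> S \<Longrightarrow> c y \<in> S \<and> (c y = y \<or> (y, c y) \<in> r)"
    and "\<And>y z. y \<in> S \<Longrightarrow> z \<in> S \<Longrightarrow> (z, c y) \<in> W \<Longrightarrow> z \<noteq> c y \<Longrightarrow> (z, c y) \<in> r"
    and "\<And>x y. x \<in> S \<Longrightarrow> y \<in> S \<Longrightarrow> (x, y) \<in> r \<Longrightarrow> (c x, c y) \<in> W"
proof
  have trans: "trans r" and total: "total_on S r"
    using r by (auto simp: strict_linear_order_on_def)
  have wo: "wo_rel W" and antisym: "antisym W" and FW: "Field W = S"
    using W well_order_on_Field[OF W]
    by (simp_all add: wo_rel_def well_order_on_def linear_order_on_def partial_order_on_def)
  define B where "B y = {z\<in>S. z = y \<or> (y, z) \<in> r}" for y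
  define c where "c y = wo_rel.minim W (B y)" for y
  have cB: "c y \<in> B y" and c_least: "z \<in> B y \<Longrightarrow> (c y, z) \<in> W" if "y \<in> S" for y z
    using wo_rel.minim_in[OF wo, of "B y"] wo_rel.minim_least[OF wo, of "B y"] FW that
    by (auto simp: c_def B_def)
  show above: "c y \<in> S \<and> (c y = y \<or> (y, c y) \<in> r)" if "y \<in> S" for y
    using cB[OF that] by (auto simp: B_def)
  show "(z, c y) \<in> r" if y: "y \<in> S" and z: "z \<in> S" "(z, c y) \<in> W" "z \<noteq> c y" for y z
  proof (rule ccontr)
    assume "(z, c y) \<notin> r"
    then have "(c y, z) \<in> r"
      using total z above[OF y] by (auto simp: total_on_def)
    then have "z \<in> B y"
      using above[OF y] trans z(1) by (auto simp: B_def dest: transD)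
    then show False
      using c_least[OF y] z antisym by (auto dest: antisymD)
  qed
  show "(c x, c y) \<in> W" if "x \<in> S" "y \<in> S" "(x, y) \<in> r" for x y
  proof -
    have "(x, c y) \<in> r"
      using above[of y] trans that by (auto dest: transD)
    then show ?thesis
      using c_least above that by (auto simp: B_def)
  qed
qed

text \<open>The records are well-ordered by W with countable initial segments, hence embed into
  omega1; the fibre of a record lies r-below it.\<close>

lemma omega1_index_with_countable_fibres:
  fixes r :: "'b rel"
  assumes r: "strict_linear_order_on S r"
    and cnt: "\<And>y. y \<in> S \<Longrightarrow> countable {z\<in>S. (z, y) \<in> r}"
  shows "\<exists>i. (\<forall>y\<in>S. i y \<in> Field omega1) \<and> (\<forall>x\<in>S. \<forall>y\<in>S. (x, y) \<in> r \<longrightarrow> (i x, i y) \<in> omega1)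
            \<and> (\<forall>y\<in>S. countable {z\<in>S. i z = i y})"
proof -
  obtain W where W: "well_order_on S W"
    using well_order_on by blast
  obtain c where above: "\<And>y. y \<in> S \<Longrightarrow> c y \<in> S \<and> (c y = y \<or> (y, c y) \<in> r)"
    and c_record: "\<And>y z. y \<in> S \<Longrightarrow> z \<in> S \<Longrightarrow> (z, c y) \<in> W \<Longrightarrow> z \<noteq> c y \<Longrightarrow> (z, c y) \<in> r"
    and c_mono: "\<And>x y. x \<in> S \<Longrightarrow> y \<in> S \<Longrightarrow> (x, y) \<in> r \<Longrightarrow> (c x, c y) \<in> W"
    using well_order_record_map[OF r W] by blast
  define Wc where "Wc = Restr W (c ` S)"
  have WcO: "Well_order Wc"
    using Well_order_Restr W well_order_on_Well_order by (fastforce simp: Wc_def)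
  have "Refl W"
    using W well_order_on_Field[OF W] by (simp add: well_order_on_def linear_order_on_def partial_order_on_def preorder_on_def)
  then have FWc: "Field Wc = c ` S"
    using Refl_Field_Restr2[of W "c ` S"] well_order_on_Field[OF W] above by (auto simp: Wc_def)
  have "countable (underS Wc a)" if "a \<in> Field Wc" for a
  proof -
    from that obtain y where y: "y \<in> S" "a = c y"
      unfolding FWc by blast
    have "underS Wc a \<subseteq> {z\<in>S. (z, c y) \<in> r}"
    proof
      fix z assume "z \<in> underS Wc a"
      then have "z \<in> S" "(z, c y) \<in> W" "z \<noteq> c y"
        using y above by (auto simp: underS_def Wc_def)
      then show "z \<in> {z\<in>S. (z, c y) \<in> r}"
        using c_record[OF y(1)] by blast
    qed
    moreover have "countable {z\<in>S. (z, c y) \<in> r}"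
      using cnt above[OF y(1)] by blast
    ultimately show ?thesis
      by (rule countable_subset)
  qed
  then have "Wc \<le>o omega1"
    by (rule ordLeq_omega1_if_countable_underS[OF WcO])
  then obtain e where e: "embed Wc omega1 e"
    unfolding ordLeq_def by blast
  have e_inj: "inj_on e (c ` S)"
    using embed_inj_on[OF WcO e] FWc by simp
  define i where "i = e \<circ> c"
  have "i y \<in> Field omega1" if "y \<in> S" for y
    using embed_Field[OF e] FWc that by (auto simp: i_def)
  moreover have "(i x, i y) \<in> omega1" if "x \<in> S" "y \<in> S" "(x, y) \<in> r" for x y
  proof -
    have "(c x, c y) \<in> Wc"
      using c_mono[OF that] that(1,2) by (simp add: Wc_def)
    then show ?thesis
      using embed_compat[OF e] unfolding compat_def i_def by simp
  qed
  moreover have "countable {z\<in>S. i z = i y}" if y: "y \<in> S" for y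
  proof -
    have "z \<in> insert (c y) {z\<in>S. (z, c y) \<in> r}" if z: "z \<in> S" "i z = i y" for z
    proof -
      have "c z = c y"
        using inj_onD[OF e_inj _ imageI imageI] z y by (simp add: i_def)
      then show ?thesis
        using above[OF z(1)] z(1) by auto
    qed
    then have "{z\<in>S. i z = i y} \<subseteq> insert (c y) {z\<in>S. (z, c y) \<in> r}"
      by blast
    moreover have "countable (insert (c y) {z\<in>S. (z, c y) \<in> r})"
      using cnt above[OF y] by simp
    ultimately show ?thesis
      by (rule countable_subset)
  qed
  ultimately show ?thesis
    by blast
qed

lemma rkey_less_asym: "rkey_less k l \<Longrightarrow> \<not> rkey_less l k"
  using antisym_omega1 by (auto simp: rkey_less_def w_less_def split: prod.splits dest: antisymD)

lemma omega1_rat_lex_embedding: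
  fixes r :: "'b rel"
  assumes r: "strict_linear_order_on S r"
    and cnt: "\<And>y. y \<in> S \<Longrightarrow> countable {z\<in>S. (z, y) \<in> r}"
  shows "\<exists>i q. (\<forall>y\<in>S. i y \<in> Field omega1)
            \<and> (\<forall>x\<in>S. \<forall>y\<in>S. (x, y) \<in> r \<longleftrightarrow> rkey_less (i x, True, q x) (i y, True, q y))"
proof -
  obtain i where iF: "\<forall>y\<in>S. i y \<in> Field omega1"
    and i_mono: "\<forall>x\<in>S. \<forall>y\<in>S. (x, y) \<in> r \<longrightarrow> (i x, i y) \<in> omega1"
    and fibre: "\<forall>y\<in>S. countable {z\<in>S. i z = i y}"
    using omega1_index_with_countable_fibres[OF r cnt] by blast
  define F where "F y = {z\<in>S. i z = i y}" for y
  define q where "q y = (SOME q::'b \<Rightarrow> rat. \<forall>a\<in>F y. \<forall>b\<in>F y. (a, b) \<in> r \<longrightarrow> q a < q b) y" for y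
  have q: "q a < q b" if "a \<in> S" "b \<in> S" "i a = i b" "(a, b) \<in> r" for a b
  proof -
    have "\<exists>q::'b \<Rightarrow> rat. \<forall>a\<in>F b. \<forall>b'\<in>F b. (a, b') \<in> r \<longrightarrow> q a < q b'"
      using fibre \<open>b \<in> S\<close> r
      by (intro countable_strict_order_mono_rat) (simp_all add: F_def strict_linear_order_on_def)
    from someI_ex[OF this] show ?thesis
      using that by (simp add: q_def F_def)
  qed
  have forward: "rkey_less (i x, True, q x) (i y, True, q y)"
    if "x \<in> S" "y \<in> S" "(x, y) \<in> r" for x y
    using i_mono q that by (auto simp: rkey_less_def w_less_def)
  have "(x, y) \<in> r" if "x \<in> S" "y \<in> S" "rkey_less (i x, True, q x) (i y, True, q y)" for x y
  proof (rule ccontr)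
    assume "(x, y) \<notin> r"
    moreover have "x \<noteq> y"
      using that(3) rkey_less_asym by blast
    ultimately have "(y, x) \<in> r"
      using r that(1,2) by (auto simp: strict_linear_order_on_def total_on_def)
    then show False
      using forward that rkey_less_asym by blast
  qed
  then show ?thesis
    using iF forward by blast
qed

lemma U_less_irrefl: "\<not> U_less w w"
  by (cases w) (auto simp: U_less_def rkey_less_def w_less_def)

lemma U_right_part_upward_closed:
  assumes "w \<in> U_carrier" "v \<in> U_carrier" "upart w = 2" "U_less w v \<or> w = v"
  shows "upart v = 2 \<and> (fst (ukey w), fst (ukey v)) \<in> omega1"
  using assms refl_omega1
  by (cases w; cases v) (auto simp: U_carrier_def U_less_def rkey_less_def w_less_def)

lemma U_left_part_downward_closed:
  assumes "w \<in> U_carrier" "u \<in> U_carrier" "upart w = 0" "U_less u w \<or> u = w"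
  shows "upart u = 0 \<and> (fst (ukey w), fst (ukey u)) \<in> omega1"
  using assms refl_omega1
  by (cases w; cases u) (auto simp: U_carrier_def U_less_def rkey_less_def w_less_def)

lemma countable_U_with_index_in:
  assumes "countable D"
  shows "countable {w\<in>U_carrier. upart w = 1 \<or> fst (ukey w) \<in> D}"
proof (rule countable_subset)
  show "{w\<in>U_carrier. upart w = 1 \<or> fst (ukey w) \<in> D} \<subseteq>
      range Mid \<union> RPt ` D \<union> case_prod RQ ` (D \<times> UNIV) \<union> LPt ` D \<union> case_prod LQ ` (D \<times> UNIV)"
  proof
    fix w assume "w \<in> {w\<in>U_carrier. upart w = 1 \<or> fst (ukey w) \<in> D}"
    then show "w \<in> range Mid \<union> RPt ` D \<union> case_prod RQ ` (D \<times> UNIV) \<union> LPt ` D \<union> case_prod LQ ` (D \<times> UNIV)"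
      by (cases w) (auto simp: image_iff)
  qed
  show "countable (range Mid \<union> RPt ` D \<union> case_prod RQ ` (D \<times> UNIV) \<union> LPt ` D \<union> case_prod LQ ` (D \<times> UNIV))"
    using assms by auto
qed

lemma countable_U_interval:
  assumes u: "u \<in> U_carrier" and v: "v \<in> U_carrier"
  shows "countable {w\<in>U_carrier. (U_less u w \<or> u = w) \<and> (U_less w v \<or> w = v)}"
proof -
  define below where "below p w = (if upart w = p then {b. (b, fst (ukey w)) \<in> omega1} else {})" for p w
  have below: "countable (below p w)" if "w \<in> U_carrier" "p \<noteq> 1" for p w
    using that countable_under_omega1 by (cases w) (auto simp: below_def U_carrier_def)
  have "{w\<in>U_carrier. (U_less u w \<or> u = w) \<and> (U_less w v \<or> w = v)} \<subseteq>
        {w\<in>U_carrier. upart w = 1 \<or> fst (ukey w) \<in> below 0 u \<union> below 2 v}"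
  proof
    fix w assume "w \<in> {w\<in>U_carrier. (U_less u w \<or> u = w) \<and> (U_less w v \<or> w = v)}"
    then have w: "w \<in> U_carrier" "U_less u w \<or> u = w" "U_less w v \<or> w = v"
      by auto
    have "upart w = 0 \<or> upart w = 1 \<or> upart w = 2"
      by (cases w) auto
    then show "w \<in> {w\<in>U_carrier. upart w = 1 \<or> fst (ukey w) \<in> below 0 u \<union> below 2 v}"
      using U_left_part_downward_closed[OF w(1) u _ w(2)] U_right_part_upward_closed[OF w(1) v _ w(3)]
      by (auto simp: below_def w(1))
  qed
  moreover have "countable {w\<in>U_carrier. upart w = 1 \<or> fst (ukey w) \<in> below 0 u \<union> below 2 v}"
    using below[OF u, of 0] below[OF v, of 2] by (intro countable_U_with_index_in) simp
  ultimately show ?thesis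
    by (rule countable_subset)
qed

lemma sim_omega_if_embeds_in_U:
  fixes L :: "'a::linorder set"
  assumes "embeds_in_U L" "x \<in> L" "y \<in> L"
  shows "sim_omega L x y"
proof -
  obtain f where f: "inj_on f L" "f ` L \<subseteq> U_carrier" "\<forall>x\<in>L. \<forall>y\<in>L. x < y \<longleftrightarrow> U_less (f x) (f y)"
    using assms(1) unfolding embeds_in_U_def by blast
  define a where "a = min x y"
  define b where "b = max x y"
  have ab: "a \<in> L" "b \<in> L"
    using assms(2,3) by (auto simp: a_def b_def min_def max_def)
  have "f ` cinterval L x y \<subseteq> {w\<in>U_carrier. (U_less (f a) w \<or> f a = w) \<and> (U_less w (f b) \<or> w = f b)}"
  proof
    fix w assume "w \<in> f ` cinterval L x y"
    then obtain z where z: "z \<in> L" "a \<le> z" "z \<le> b" "w = f z"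
      unfolding cinterval_def a_def b_def by blast
    then show "w \<in> {w\<in>U_carrier. (U_less (f a) w \<or> f a = w) \<and> (U_less w (f b) \<or> w = f b)}"
      using f(2,3) ab by (auto simp: order.order_iff_strict)
  qed
  then have "countable (f ` cinterval L x y)"
    using countable_U_interval[of "f a" "f b"] f(2) ab by (meson countable_subset image_subset_iff)
  moreover have "inj_on f (cinterval L x y)"
    using f(1) by (rule inj_on_subset) (auto simp: cinterval_def)
  ultimately show ?thesis
    unfolding sim_omega_def using countable_image_inj_on by blast
qed

lemma embeds_in_U_from_rays:
  fixes L :: "'a::linorder set"
  assumes x0: "x0 \<in> L"
    and i1: "\<forall>y\<in>L. x0 < y \<longrightarrow> i1 y \<in> Field omega1"
    and right: "\<forall>x\<in>L. \<forall>y\<in>L. x0 < x \<longrightarrow> x0 < y \<longrightarrow>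
       x < y \<longleftrightarrow> rkey_less (i1 x, True, q1 x) (i1 y, True, q1 y)"
    and i2: "\<forall>y\<in>L. y < x0 \<longrightarrow> i2 y \<in> Field omega1"
    and left: "\<forall>x\<in>L. \<forall>y\<in>L. x < x0 \<longrightarrow> y < x0 \<longrightarrow>
       y < x \<longleftrightarrow> rkey_less (i2 x, True, q2 x) (i2 y, True, q2 y)"
  shows "embeds_in_U L"
proof -
  define f where
    "f y = (if y = x0 then Mid 0 else if x0 < y then RQ (i1 y) (q1 y) else LQ (i2 y) (q2 y))" for y
  have "f y \<in> U_carrier" if "y \<in> L" for y
    using that i1 i2 by (cases y x0 rule: linorder_cases) (auto simp: f_def U_carrier_def)
  moreover have ord: "x < y \<longleftrightarrow> U_less (f x) (f y)" if "x \<in> L" "y \<in> L" for x y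
  proof -
    have "\<not> rkey_less k k" for k
      using rkey_less_asym by blast
    then show ?thesis
      using that right[rule_format, of x y] left[rule_format, of y x]
      by (cases x x0 rule: linorder_cases; cases y x0 rule: linorder_cases) (auto simp: f_def U_less_def)
  qed
  moreover have "inj_on f L"
    using ord U_less_irrefl by (metis inj_onI linorder_neqE)
  ultimately show ?thesis
    unfolding embeds_in_U_def by blast
qed

lemma embeds_in_U_if_sim_omega:
  fixes L :: "'a::linorder set"
  assumes sim: "\<forall>x\<in>L. \<forall>y\<in>L. sim_omega L x y"
  shows "embeds_in_U L"
proof (cases "L = {}")
  case True
  then show ?thesis
    by (simp add: embeds_in_U_def)
next
  case False
  then obtain x0 where x0: "x0 \<in> L"
    by blast
  define less where "less = {(a, b). a < (b::'a)}"
  have slo: "strict_linear_order_on A less" "strict_linear_order_on A (less\<inverse>)" for A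
    by (auto simp: less_def strict_linear_order_on_def trans_def irrefl_def total_on_def)
  have between: "countable {z\<in>L. min x0 y \<le> z \<and> z \<le> max x0 y}" if "y \<in> L" for y
    using sim x0 that by (simp add: sim_omega_def cinterval_def)
  have right_cnt: "countable {z\<in>{y\<in>L. x0 < y}. (z, y) \<in> less}" if "y \<in> {y\<in>L. x0 < y}" for y
    by (rule countable_subset[OF _ between]) (use that in \<open>auto simp: less_def\<close>)
  obtain i1 q1 where right: "\<forall>y\<in>{y\<in>L. x0 < y}. i1 y \<in> Field omega1"
    "\<forall>x\<in>{y\<in>L. x0 < y}. \<forall>y\<in>{y\<in>L. x0 < y}.
       (x, y) \<in> less \<longleftrightarrow> rkey_less (i1 x, True, q1 x) (i1 y, True, q1 y)"
    using omega1_rat_lex_embedding[OF slo(1) right_cnt] by blast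
  have left_cnt: "countable {z\<in>{y\<in>L. y < x0}. (z, y) \<in> less\<inverse>}" if "y \<in> {y\<in>L. y < x0}" for y
    by (rule countable_subset[OF _ between]) (use that in \<open>auto simp: less_def\<close>)
  obtain i2 q2 where left: "\<forall>y\<in>{y\<in>L. y < x0}. i2 y \<in> Field omega1"
    "\<forall>x\<in>{y\<in>L. y < x0}. \<forall>y\<in>{y\<in>L. y < x0}.
       (x, y) \<in> less\<inverse> \<longleftrightarrow> rkey_less (i2 x, True, q2 x) (i2 y, True, q2 y)"
    using omega1_rat_lex_embedding[OF slo(2) left_cnt] by blast
  show ?thesis
    using right left by (intro embeds_in_U_from_rays[OF x0]) (auto simp: less_def)
qed

theorem theorem3p17:
  fixes L :: "'a::linorder set"
  shows "(\<forall>x\<in>L. \<forall>y\<in>L. sim_omega L x y) \<longleftrightarrow> embeds_in_U L"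
  using embeds_in_U_if_sim_omega sim_omega_if_embeds_in_U by blast

end
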